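(* Let $A\subset\mathbb{N}$. Suppose there exist a Følner sequence $\Phi$ in $\mathbb{N}$, a set $L\subset\mathbb{N}$ and $\epsilon>0$ such that $\mathsf{d}_\Phi\big((A-m)\cap L\big)$ exists for every $m\in\mathbb{N}$, and such that for every finite subset $F\subset L$ the set $$\bigcap_{\ell\in F}(A-\ell)\ \cap\ \Big\{m\in\mathbb{N}:\mathsf{d}_\Phi\big((A-m)\cap L\big)>\epsilon\Big\}$$ is infinite. Then there exist infinite sets $B,C\subset\mathbb{N}$ such that $B+C\subset A$.
   Context: A Følner sequence in $\mathbb{N}$ is a sequence $\Phi\colon N\mapsto\Phi_N$ of finite non-empty subsets of $\mathbb{N}$ with $|(\Phi_N+m)\triangle\Phi_N|/|\Phi_N|\to0$ for all $m\in\mathbb{N}$. For $E\subset\mathbb{N}$, $\mathsf{d}_\Phi(E)=\lim_{N\to\infty}|E\cap\Phi_N|/|\Phi_N|$ when the limit exists. For $m\in\mathbb{N}$, $A-m=\{n\in\mathbb{N}:n+m\in A\}$. *)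

theory Defs
  imports "HOL-Analysis.Analysis"
begin

text \<open>Convention: the paper's N is the set of positive integers, modelled as
  the subset {1..} of nat.\<close>

abbreviation Npos :: "nat set" where "Npos \<equiv> {1..}"

definition folner :: "(nat \<Rightarrow> nat set) \<Rightarrow> bool" where
  "folner \<Phi> \<longleftrightarrow>
     (\<forall>N. finite (\<Phi> N) \<and> \<Phi> N \<noteq> {} \<and> \<Phi> N \<subseteq> Npos) \<and>
     (\<forall>m\<in>Npos. (\<lambda>N. real (card (((\<lambda>x. x + m) ` \<Phi> N) - \<Phi> N \<union> (\<Phi> N - ((\<lambda>x. x + m) ` \<Phi> N))))
                     / real (card (\<Phi> N))) \<longlonglongrightarrow> 0)"

definition dens_seq :: "(nat \<Rightarrow> nat set) \<Rightarrow> nat set \<Rightarrow> nat \<Rightarrow> real" where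
  "dens_seq \<Phi> E N = real (card (E \<inter> \<Phi> N)) / real (card (\<Phi> N))"

definition density_exists :: "(nat \<Rightarrow> nat set) \<Rightarrow> nat set \<Rightarrow> bool" where
  "density_exists \<Phi> E \<longleftrightarrow> convergent (dens_seq \<Phi> E)"

definition density :: "(nat \<Rightarrow> nat set) \<Rightarrow> nat set \<Rightarrow> real" where
  "density \<Phi> E = lim (dens_seq \<Phi> E)"

definition shiftset :: "nat set \<Rightarrow> nat \<Rightarrow> nat set" where
  "shiftset A m = {n \<in> Npos. n + m \<in> A}"

end

theory Submission
  imports Defs
begin

(* Let x be a cluster point, in the product topology, of the sampling functionals
   E |-> |E \<inter> Phi_N| / |Phi_N|. It vanishes on finite sets, agrees with the density
   wherever that exists, and inherits from Cauchy-Schwarz the second moment inequality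
   (sum_j x(F_j))^2 <= sum_(a,b) x(F_a \<inter> F_b). Hence, among infinitely many sets of
   x-mass >= delta, one meets infinitely many of the others in mass > delta^2/2.
   Choose beta_k >= k in the set of the hypothesis for F = L \<inter> [1,k]: the sets
   E_k = (A - beta_k) \<inter> L have mass >= epsilon and contain L \<inter> [1,k]. Refining
   intersections of them repeatedly gives k_1 < k_2 < ... and c_1 < c_2 < ... with c_j in
   every E_(k_i), and then B = {beta_(k_i)} and C = {c_j} work. *)

lemma sum_card_Int_squared_le:
  fixes F :: "'b \<Rightarrow> 'a set"
  assumes "finite P"
  shows "(\<Sum>j\<in>S. real (card (F j \<inter> P)))\<^sup>2
           \<le> real (card P) * (\<Sum>a\<in>S. \<Sum>b\<in>S. real (card (F a \<inter> F b \<inter> P)))"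
proof -
  define g where "g y = (\<Sum>j\<in>S. indicator (F j) y :: real)" for y
  have card_eq: "real (card (G \<inter> P)) = (\<Sum>y\<in>P. indicator G y)" for G
    using assms by (subst Int_commute) (simp add: indicator_def sum.If_cases Int_def)
  have linear: "(\<Sum>j\<in>S. real (card (F j \<inter> P))) = (\<Sum>y\<in>P. g y)"
    unfolding card_eq g_def by (rule sum.swap)
  have "(\<Sum>a\<in>S. \<Sum>b\<in>S. real (card (F a \<inter> F b \<inter> P)))
      = (\<Sum>a\<in>S. \<Sum>b\<in>S. \<Sum>y\<in>P. indicator (F a) y * indicator (F b) y)"
    unfolding card_eq indicator_inter_arith ..
  also have "\<dots> = (\<Sum>a\<in>S. \<Sum>y\<in>P. \<Sum>b\<in>S. indicator (F a) y * indicator (F b) y)"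
    by (intro sum.cong refl sum.swap)
  also have "\<dots> = (\<Sum>y\<in>P. (g y)\<^sup>2)"
    unfolding g_def power2_eq_square sum_product by (rule sum.swap)
  finally show ?thesis
    using sum_squared_le_sum_of_squares[of g P] by (simp add: linear mult.commute)
qed

lemma dens_seq_nonneg: "0 \<le> dens_seq \<Phi> E N"
  by (simp add: dens_seq_def)

lemma dens_seq_le_1: "dens_seq \<Phi> E N \<le> 1"
proof (cases "finite (\<Phi> N)")
  case True
  then have "card (E \<inter> \<Phi> N) \<le> card (\<Phi> N)"
    by (intro card_mono) auto
  then show ?thesis
    by (cases "card (\<Phi> N) = 0") (simp_all add: dens_seq_def divide_le_eq_1)
qed (simp add: dens_seq_def)

lemma dens_seq_sum_squared_le:
  "(\<Sum>j\<in>S. dens_seq \<Phi> (F j) N)\<^sup>2 \<le> (\<Sum>a\<in>S. \<Sum>b\<in>S. dens_seq \<Phi> (F a \<inter> F b) N)"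
proof (cases "card (\<Phi> N) = 0")
  case False
  define n where "n = real (card (\<Phi> N))"
  have n: "n > 0" using False by (simp add: n_def)
  have "(\<Sum>j\<in>S. dens_seq \<Phi> (F j) N)\<^sup>2 = (\<Sum>j\<in>S. real (card (F j \<inter> \<Phi> N)))\<^sup>2 / n\<^sup>2"
    by (simp add: dens_seq_def n_def sum_divide_distrib[symmetric] power_divide)
  also have "\<dots> \<le> n * (\<Sum>a\<in>S. \<Sum>b\<in>S. real (card (F a \<inter> F b \<inter> \<Phi> N))) / n\<^sup>2"
    using False n unfolding n_def
    by (intro divide_right_mono sum_card_Int_squared_le) (auto intro: card_ge_0_finite)
  also have "\<dots> = (\<Sum>a\<in>S. \<Sum>b\<in>S. dens_seq \<Phi> (F a \<inter> F b) N)"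
    using n by (simp add: dens_seq_def n_def sum_divide_distrib[symmetric] power2_eq_square)
  finally show ?thesis .
qed (simp add: dens_seq_def)

definition density_cluster :: "(nat \<Rightarrow> nat set) \<Rightarrow> (nat set \<Rightarrow> real) \<Rightarrow> bool" where
  "density_cluster \<Phi> x \<longleftrightarrow>
     (\<forall>C. closed C \<longrightarrow> (\<forall>\<^sub>F N in sequentially. (\<lambda>E. dens_seq \<Phi> E N) \<in> C) \<longrightarrow> x \<in> C)"

lemma compact_sequence_cluster_point:
  assumes "compact K" "\<And>n. f n \<in> K"
  shows "\<exists>x\<in>K. \<forall>C. closed C \<longrightarrow> (\<forall>\<^sub>F n in sequentially. f n \<in> C) \<longrightarrow> x \<in> C"
proof -
  have "filtermap f sequentially \<noteq> bot" "\<forall>\<^sub>F y in filtermap f sequentially. y \<in> K"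
    using assms(2) by (simp_all add: filtermap_bot_iff eventually_filtermap)
  then obtain x where x: "x \<in> K" "inf (nhds x) (filtermap f sequentially) \<noteq> bot"
    using assms(1) unfolding compact_filter by blast
  have "x \<in> C" if C: "closed C" "\<forall>\<^sub>F n in sequentially. f n \<in> C" for C
  proof (rule ccontr)
    assume "x \<notin> C"
    then have "\<forall>\<^sub>F y in nhds x. y \<in> - C"
      using C(1) by (intro eventually_nhds_in_open) auto
    moreover have "\<forall>\<^sub>F y in filtermap f sequentially. y \<in> C"
      using C(2) by (simp add: eventually_filtermap)
    ultimately have "\<forall>\<^sub>F y in inf (nhds x) (filtermap f sequentially). False"
      unfolding eventually_inf by (intro exI[of _ "\<lambda>y. y \<in> - C"] exI[of _ "\<lambda>y. y \<in> C"]) auto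
    with x(2) show False by (simp add: eventually_False)
  qed
  then show ?thesis
    using x(1) by blast
qed

lemma density_cluster_exists: "\<exists>x. density_cluster \<Phi> x"
proof -
  define K where "K = PiE UNIV (\<lambda>_::nat set. {0..1::real})"
  have "compactin (product_topology (\<lambda>_. euclidean) UNIV) K"
    unfolding K_def by (subst compactin_PiE) auto
  then have "compact K"
    by (simp add: euclidean_product_topology)
  moreover have "(\<lambda>E. dens_seq \<Phi> E N) \<in> K" for N
    unfolding K_def by (simp add: PiE_iff dens_seq_nonneg dens_seq_le_1)
  ultimately have "\<exists>x\<in>K. \<forall>C. closed C \<longrightarrow> (\<forall>\<^sub>F N in sequentially. (\<lambda>E. dens_seq \<Phi> E N) \<in> C) \<longrightarrow> x \<in> C"
    by (rule compact_sequence_cluster_point[of K "\<lambda>N E. dens_seq \<Phi> E N"])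
  then show ?thesis
    unfolding density_cluster_def by blast
qed

lemma density_cluster_closed:
  assumes "density_cluster \<Phi> x" "closed C" "\<And>N. (\<lambda>E. dens_seq \<Phi> E N) \<in> C"
  shows "x \<in> C"
proof -
  have "\<forall>\<^sub>F N in sequentially. (\<lambda>E. dens_seq \<Phi> E N) \<in> C"
    using assms(3) by simp
  then show ?thesis
    using assms(1,2) unfolding density_cluster_def by blast
qed

lemma density_cluster_eq_density:
  assumes x: "density_cluster \<Phi> x" and E: "density_exists \<Phi> E"
  shows "x E = density \<Phi> E"
proof -
  have lim: "dens_seq \<Phi> E \<longlonglongrightarrow> density \<Phi> E"
    using E unfolding density_exists_def density_def by (simp add: convergent_LIMSEQ_iff)
  have "dist (x E) (density \<Phi> E) \<le> \<eta>" if "\<eta> > 0" for \<eta>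
  proof -
    have "\<forall>\<^sub>F N in sequentially. dist (dens_seq \<Phi> E N) (density \<Phi> E) < \<eta>"
      using lim that by (rule tendstoD)
    then have "\<forall>\<^sub>F N in sequentially. (\<lambda>E. dens_seq \<Phi> E N) \<in> {f. dist (f E) (density \<Phi> E) \<le> \<eta>}"
      by (auto elim: eventually_mono)
    moreover have "closed {f :: nat set \<Rightarrow> real. dist (f E) (density \<Phi> E) \<le> \<eta>}"
      by (intro closed_Collect_le continuous_intros continuous_on_product_coordinates)
    ultimately show ?thesis
      using x unfolding density_cluster_def by blast
  qed
  then show ?thesis
    using field_le_epsilon[of "dist (x E) (density \<Phi> E)" 0] by simp
qed

lemma folner_card_tendsto:
  assumes "folner \<Phi>"
  shows "filterlim (\<lambda>N. real (card (\<Phi> N))) at_top sequentially"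
proof -
  define D where "D N = (\<lambda>x. x + 1) ` \<Phi> N - \<Phi> N \<union> (\<Phi> N - (\<lambda>x. x + 1) ` \<Phi> N)" for N
  have fin: "finite (\<Phi> N)" "\<Phi> N \<noteq> {}" for N
    using assms unfolding folner_def by auto
  have "\<forall>m\<in>Npos. (\<lambda>N. real (card ((\<lambda>x. x + m) ` \<Phi> N - \<Phi> N \<union> (\<Phi> N - (\<lambda>x. x + m) ` \<Phi> N)))
                        / real (card (\<Phi> N))) \<longlonglongrightarrow> 0"
    using assms unfolding folner_def by blast
  then have ratio: "(\<lambda>N. real (card (D N)) / real (card (\<Phi> N))) \<longlonglongrightarrow> 0"
    unfolding D_def by (rule bspec) simp
  have "inverse (real (card (\<Phi> N))) \<le> real (card (D N)) / real (card (\<Phi> N))" for N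
  proof -
    \<comment> \<open>the successor of the maximum of \<open>\<Phi> N\<close> lies in the shifted set only\<close>
    have "Max (\<Phi> N) + 1 \<in> D N" "finite (D N)"
      using fin[of N] unfolding D_def by (auto dest: Max_ge)
    then have "1 \<le> card (D N)"
      by (metis Suc_leI card_gt_0_iff empty_iff One_nat_def)
    then show ?thesis
      by (simp add: divide_right_mono field_simps)
  qed
  then have "(\<lambda>N. inverse (real (card (\<Phi> N)))) \<longlonglongrightarrow> 0"
    by (intro tendsto_sandwich[OF _ _ tendsto_const ratio]) auto
  then have "filterlim (\<lambda>N. inverse (inverse (real (card (\<Phi> N))))) at_top sequentially"
    using fin by (intro filterlim_inverse_at_top) (auto simp: card_gt_0_iff)
  then show ?thesis by simp
qed

lemma folner_density_finite:
  assumes "folner \<Phi>" "finite E"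
  shows "density_exists \<Phi> E" "density \<Phi> E = 0"
proof -
  have lim: "(\<lambda>N. real (card E) * inverse (real (card (\<Phi> N)))) \<longlonglongrightarrow> 0"
    using tendsto_mult_right_zero[OF tendsto_inverse_0_at_top[OF folner_card_tendsto[OF assms(1)]]] .
  have bound: "dens_seq \<Phi> E N \<le> real (card E) * inverse (real (card (\<Phi> N)))" for N
  proof -
    have "card (E \<inter> \<Phi> N) \<le> card E"
      using assms(2) by (simp add: card_mono)
    then show ?thesis
      unfolding dens_seq_def divide_inverse by (simp add: mult_right_mono)
  qed
  have "dens_seq \<Phi> E \<longlonglongrightarrow> 0"
    by (rule tendsto_sandwich[OF _ _ tendsto_const lim]) (simp_all add: dens_seq_nonneg bound)
  then show "density_exists \<Phi> E" "density \<Phi> E = 0"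
    unfolding density_exists_def density_def by (auto intro: convergentI limI)
qed

(* The properties of a cluster point used below; square_sum_le is Cauchy-Schwarz for the
   counting measure on Phi N, passed to the limit. *)
locale density_functional =
  fixes \<mu> :: "'a set \<Rightarrow> real"
  assumes le_one: "\<mu> E \<le> 1"
    and finite_eq_0: "finite E \<Longrightarrow> \<mu> E = 0"
    and square_sum_le: "(\<Sum>j\<in>S. \<mu> ((F :: nat \<Rightarrow> 'a set) j))\<^sup>2 \<le> (\<Sum>a\<in>S. \<Sum>b\<in>S. \<mu> (F a \<inter> F b))"

lemma density_cluster_density_functional:
  assumes x: "density_cluster \<Phi> x" and "folner \<Phi>"
  shows "density_functional x"
proof
  fix E :: "nat set"
  have "closed {f :: nat set \<Rightarrow> real. f E \<le> 1}"
    by (intro closed_Collect_le continuous_intros continuous_on_product_coordinates)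
  then show "x E \<le> 1"
    using density_cluster_closed[OF x] dens_seq_le_1 by blast
  show "x E = 0" if "finite E"
    using density_cluster_eq_density[OF x] folner_density_finite[OF \<open>folner \<Phi>\<close> that] by simp
next
  fix S and F :: "nat \<Rightarrow> nat set"
  have "closed {f :: nat set \<Rightarrow> real. (\<Sum>j\<in>S. f (F j))\<^sup>2 \<le> (\<Sum>a\<in>S. \<Sum>b\<in>S. f (F a \<inter> F b))}"
    by (intro closed_Collect_le continuous_intros continuous_on_product_coordinates)
  then show "(\<Sum>j\<in>S. x (F j))\<^sup>2 \<le> (\<Sum>a\<in>S. \<Sum>b\<in>S. x (F a \<inter> F b))"
    using density_cluster_closed[OF x] dens_seq_sum_squared_le by blast
qed

lemma exists_pairwise_independent_subset:
  assumes "infinite J" "\<And>i. i \<in> J \<Longrightarrow> finite {j\<in>J. R i j}" "symp R"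
  shows "\<exists>S\<subseteq>J. finite S \<and> card S = n \<and> pairwise (\<lambda>a b. \<not> R a b) S"
proof (induction n)
  case 0
  show ?case by (intro exI[of _ "{}"]) auto
next
  case (Suc n)
  then obtain S where S: "S \<subseteq> J" "finite S" "card S = n" "pairwise (\<lambda>a b. \<not> R a b) S"
    by blast
  have "finite (S \<union> (\<Union>a\<in>S. {j\<in>J. R a j}))"
    using S assms(2) by auto
  then have "infinite (J - (S \<union> (\<Union>a\<in>S. {j\<in>J. R a j})))"
    using assms(1) by (rule Diff_infinite_finite)
  then obtain j where "j \<in> J - (S \<union> (\<Union>a\<in>S. {j\<in>J. R a j}))"
    using infinite_imp_nonempty by blast
  then have "j \<in> J" "j \<notin> S" "\<And>a. a \<in> S \<Longrightarrow> \<not> R a j"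
    by auto
  then show ?case
    using S \<open>symp R\<close> by (intro exI[of _ "insert j S"]) (auto simp: pairwise_insert symp_def)
qed

lemma (in density_functional) card_mult_square_le_2:
  fixes F :: "nat \<Rightarrow> 'a set"
  assumes "finite S" "0 \<le> \<delta>" "\<And>j. j \<in> S \<Longrightarrow> \<delta> \<le> \<mu> (F j)"
    and "pairwise (\<lambda>a b. \<mu> (F a \<inter> F b) \<le> \<delta>\<^sup>2 / 2) S"
  shows "real (card S) * \<delta>\<^sup>2 \<le> 2"
proof -
  define n where "n = real (card S)"
  have "n * \<delta> \<le> (\<Sum>j\<in>S. \<mu> (F j))"
    unfolding n_def using assms(3) by (rule sum_bounded_below)
  then have "(n * \<delta>)\<^sup>2 \<le> (\<Sum>j\<in>S. \<mu> (F j))\<^sup>2"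
    using assms(2) by (intro power_mono) (simp_all add: n_def)
  also have "\<dots> \<le> (\<Sum>a\<in>S. \<Sum>b\<in>S. \<mu> (F a \<inter> F b))"
    by (rule square_sum_le)
  also have "\<dots> \<le> (\<Sum>a\<in>S. \<Sum>b\<in>S. (if a = b then 1 else 0) + \<delta>\<^sup>2 / 2)"
  proof (intro sum_mono)
    fix a b assume "a \<in> S" "b \<in> S"
    then show "\<mu> (F a \<inter> F b) \<le> (if a = b then 1 else 0) + \<delta>\<^sup>2 / 2"
      using assms(4) le_one[of "F a \<inter> F b"] by (auto simp: pairwise_def add_increasing2)
  qed
  also have "\<dots> = n + n * n * \<delta>\<^sup>2 / 2"
    using assms(1) by (simp add: sum.distrib n_def algebra_simps)
  finally have "n * (n * \<delta>\<^sup>2) \<le> n * 2"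
    by (simp add: power_mult_distrib power2_eq_square algebra_simps)
  then show ?thesis
    by (cases "n = 0") (simp_all add: n_def)
qed

lemma (in density_functional) exists_infinitely_correlated:
  fixes F :: "nat \<Rightarrow> 'a set"
  assumes "infinite J" "\<delta> > 0" "\<And>j. j \<in> J \<Longrightarrow> \<delta> \<le> \<mu> (F j)"
  shows "\<exists>i\<in>J. infinite {j\<in>J. \<delta>\<^sup>2 / 2 < \<mu> (F i \<inter> F j)}"
proof (rule ccontr)
  assume "\<not> ?thesis"
  then have "\<exists>S\<subseteq>J. finite S \<and> card S = n \<and> pairwise (\<lambda>a b. \<not> \<delta>\<^sup>2 / 2 < \<mu> (F a \<inter> F b)) S" for n
    using assms(1) by (intro exists_pairwise_independent_subset) (auto simp: symp_def Int_commute)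
  then obtain S where S: "S \<subseteq> J" "finite S" "card S = nat \<lceil>2 / \<delta>\<^sup>2\<rceil> + 1"
    and small: "pairwise (\<lambda>a b. \<mu> (F a \<inter> F b) \<le> \<delta>\<^sup>2 / 2) S"
    by (auto simp: not_less)
  have "real (card S) * \<delta>\<^sup>2 \<le> 2"
    using S(1,2) assms(2,3) small by (intro card_mult_square_le_2) auto
  moreover have "2 / \<delta>\<^sup>2 < real (card S)"
    using S(3) real_nat_ceiling_ge[of "2 / \<delta>\<^sup>2"] by linarith
  ultimately show False
    using assms(2) by (simp add: pos_divide_less_eq)
qed

lemma (in density_functional) exists_large_refinement:
  fixes E :: "nat \<Rightarrow> 'a set"
  assumes "\<delta> > 0" "infinite {j. \<delta> \<le> \<mu> (G \<inter> E j)}"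
  shows "\<exists>i\<ge>m. infinite (G \<inter> E i) \<and> infinite {j. \<delta>\<^sup>2 / 2 < \<mu> (G \<inter> E i \<inter> E j)}"
proof -
  define J where "J = {j. \<delta> \<le> \<mu> (G \<inter> E j)} - {..<m}"
  have "infinite J"
    unfolding J_def using assms(2) by (rule Diff_infinite_finite[rotated]) simp
  then obtain i where "i \<in> J" and inf: "infinite {j\<in>J. \<delta>\<^sup>2 / 2 < \<mu> (G \<inter> E i \<inter> (G \<inter> E j))}"
    using exists_infinitely_correlated[of J \<delta> "\<lambda>j. G \<inter> E j"] assms(1) unfolding J_def by blast
  have "G \<inter> E i \<inter> (G \<inter> E j) = G \<inter> E i \<inter> E j" for j
    by blast
  then have "infinite {j. \<delta>\<^sup>2 / 2 < \<mu> (G \<inter> E i \<inter> E j)}"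
    using inf by (auto elim: infinite_super[rotated])
  moreover have "infinite (G \<inter> E i)"
  proof
    assume "finite (G \<inter> E i)"
    then show False
      using \<open>i \<in> J\<close> assms(1) finite_eq_0 unfolding J_def by auto
  qed
  ultimately show ?thesis
    using \<open>i \<in> J\<close> unfolding J_def by (intro exI[of _ i]) auto
qed

definition large_along :: "('a set \<Rightarrow> real) \<Rightarrow> (nat \<Rightarrow> 'a set) \<Rightarrow> 'a set \<Rightarrow> bool" where
  "large_along \<mu> E G \<longleftrightarrow> (\<exists>\<delta>>0. infinite {j. \<delta> \<le> \<mu> (G \<inter> E j)})"

lemma large_along_step:
  fixes \<mu> :: "nat set \<Rightarrow> real"
  assumes "density_functional \<mu>" "large_along \<mu> E G"
  shows "\<exists>i c. m \<le> i \<and> m < c \<and> c \<in> G \<inter> E i \<and> large_along \<mu> E (G \<inter> E i)"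
proof -
  obtain \<delta> where \<delta>: "\<delta> > 0" "infinite {j. \<delta> \<le> \<mu> (G \<inter> E j)}"
    using assms(2) unfolding large_along_def by blast
  then obtain i where "m \<le> i" "infinite (G \<inter> E i)"
    and inf: "infinite {j. \<delta>\<^sup>2 / 2 < \<mu> (G \<inter> E i \<inter> E j)}"
    using density_functional.exists_large_refinement[OF assms(1)] by blast
  moreover have "infinite {j. \<delta>\<^sup>2 / 2 \<le> \<mu> (G \<inter> E i \<inter> E j)}"
    using inf by (rule infinite_super[rotated]) auto
  then have "large_along \<mu> E (G \<inter> E i)"
    unfolding large_along_def using \<delta>(1) by (intro exI[of _ "\<delta>\<^sup>2 / 2"]) auto
  ultimately show ?thesis
    by (metis infinite_nat_iff_unbounded)
qed

lemma exists_strict_mono_in_all: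
  fixes \<mu> :: "nat set \<Rightarrow> real" and E :: "nat \<Rightarrow> nat set"
  assumes "density_functional \<mu>" "\<epsilon> > 0" "\<And>k. \<epsilon> \<le> \<mu> (E k)"
    and absorb: "\<And>l k k'. l \<in> E k \<Longrightarrow> l \<le> k' \<Longrightarrow> l \<in> E k'"
  shows "\<exists>(k :: nat \<Rightarrow> nat) (c :: nat \<Rightarrow> nat). strict_mono k \<and> strict_mono c \<and> (\<forall>i j. c j \<in> E (k i))"
proof -
  note step = large_along_step[OF assms(1)]
  \<comment> \<open>state \<open>(G, k, c)\<close>: current intersection, last index chosen, last element chosen\<close>
  define P where "P = (\<lambda>(G, k, c :: nat). large_along \<mu> E G \<and> c \<in> G \<and> G \<subseteq> E k)"
  define Q where "Q = (\<lambda>(G :: nat set, k :: nat, c :: nat) (G', k', c'). G' \<subseteq> G \<and> k < k' \<and> c \<le> k' \<and> c < c')"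
  have "\<exists>f. \<forall>n. P (f n) \<and> Q (f n) (f (Suc n))"
  proof (rule dependent_nat_choice)
    have "large_along \<mu> E UNIV"
      unfolding large_along_def using assms(2,3) by auto
    then show "\<exists>s. P s"
      using step[of E UNIV 0] unfolding P_def by auto
  next
    fix s n assume "P s"
    then obtain G k c where s: "s = (G, k, c)" "large_along \<mu> E G" "c \<in> G"
      unfolding P_def by (cases s) auto
    then show "\<exists>t. P t \<and> Q s t"
      using step[of E G "max (Suc k) c"] unfolding P_def Q_def by fastforce
  qed
  then obtain f where f: "\<And>n. P (f n)" "\<And>n. Q (f n) (f (Suc n))"
    by blast
  define G where "G n = fst (f n)" for n
  define k where "k n = fst (snd (f n))" for n
  define c where "c n = snd (snd (f n))" for n
  have G: "c n \<in> G n" "G n \<subseteq> E (k n)" for n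
    using f(1)[of n] unfolding P_def G_def k_def c_def by (auto simp: split_beta)
  have Q: "G (Suc n) \<subseteq> G n" "k n < k (Suc n)" "c n \<le> k (Suc n)" "c n < c (Suc n)" for n
    using f(2)[of n] unfolding Q_def G_def k_def c_def by (auto simp: split_beta)
  have "strict_mono k" "strict_mono c" "decseq G"
    using Q by (simp_all add: strict_mono_Suc_iff decseq_Suc_iff)
  have "c j \<in> E (k i)" for i j
  proof (cases "i \<le> j")
    case True
    then have "G j \<subseteq> G i"
      using \<open>decseq G\<close> by (simp add: decseq_def)
    then show ?thesis
      using G(1)[of j] G(2)[of i] by blast
  next
    case False
    \<comment> \<open>\<open>c j\<close> was chosen before \<open>k i\<close>, and is therefore absorbed by \<open>E (k i)\<close>\<close>
    then have "c j \<le> k i"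
      using Q(3)[of j] \<open>strict_mono k\<close> by (metis Suc_leI not_le order.trans strict_mono_less_eq)
    then show ?thesis
      using G absorb by blast
  qed
  then show ?thesis
    using \<open>strict_mono k\<close> \<open>strict_mono c\<close> by blast
qed

lemma exists_infinite_sumset_subset:
  fixes \<mu> :: "nat set \<Rightarrow> real" and A L :: "nat set"
  assumes "density_functional \<mu>" "\<epsilon> > 0" "L \<subseteq> Npos"
    and "\<And>F. finite F \<Longrightarrow> F \<subseteq> L \<Longrightarrow>
           infinite ((\<Inter>l\<in>F. shiftset A l) \<inter> {m \<in> Npos. \<epsilon> \<le> \<mu> (shiftset A m \<inter> L)})"
  shows "\<exists>B C. B \<subseteq> Npos \<and> C \<subseteq> Npos \<and> infinite B \<and> infinite C \<and>
           {b + c | b c. b \<in> B \<and> c \<in> C} \<subseteq> A"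
proof -
  define M where "M k = (\<Inter>l\<in>L \<inter> {..k}. shiftset A l) \<inter> {m \<in> Npos. \<epsilon> \<le> \<mu> (shiftset A m \<inter> L)}" for k
  have "\<exists>b\<ge>k. b \<in> M k" for k
    using assms(4)[of "L \<inter> {..k}"] unfolding M_def infinite_nat_iff_unbounded_le by auto
  then obtain \<beta> where \<beta>: "\<And>k. k \<le> \<beta> k" "\<And>k. \<beta> k \<in> M k"
    by metis
  define E where "E k = shiftset A (\<beta> k) \<inter> L" for k
  have large: "\<epsilon> \<le> \<mu> (E k)" for k
    using \<beta>(2)[of k] unfolding M_def E_def by auto
  have absorb: "l \<in> E k'" if "l \<in> E k" "l \<le> k'" for l k k'
    using that \<beta>(2)[of k'] unfolding E_def M_def shiftset_def by (auto simp: add.commute)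
  have "\<exists>(k :: nat \<Rightarrow> nat) (c :: nat \<Rightarrow> nat). strict_mono k \<and> strict_mono c \<and> (\<forall>i j. c j \<in> E (k i))"
    using assms(1,2) large absorb by (rule exists_strict_mono_in_all)
  then obtain k c :: "nat \<Rightarrow> nat" where k: "strict_mono k" and c: "strict_mono c" and kc: "\<And>i j. c j \<in> E (k i)"
    by blast
  show ?thesis
  proof (intro exI conjI)
    show "range (\<beta> \<circ> k) \<subseteq> Npos"
      using \<beta>(2) unfolding M_def by auto
    show "range c \<subseteq> Npos"
      using kc assms(3) unfolding E_def by blast
    show "infinite (range c)"
      using c by (simp add: range_inj_infinite strict_mono_imp_inj_on)
    have "i \<le> \<beta> (k i)" for i
      using \<beta>(1)[of "k i"] seq_suble[OF k, of i] by linarith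
    then show "infinite (range (\<beta> \<circ> k))"
      unfolding infinite_nat_iff_unbounded_le by auto
    show "{b + c' | b c'. b \<in> range (\<beta> \<circ> k) \<and> c' \<in> range c} \<subseteq> A"
      using kc unfolding E_def shiftset_def by (auto simp: add.commute)
  qed
qed

theorem proposition2p5:
  fixes A L :: "nat set" and \<Phi> :: "nat \<Rightarrow> nat set" and \<epsilon> :: real
  assumes "A \<subseteq> Npos" and "L \<subseteq> Npos"
    and "folner \<Phi>" and "\<epsilon> > 0"
    and "\<forall>m\<in>Npos. density_exists \<Phi> (shiftset A m \<inter> L)"
    and "\<forall>F. finite F \<and> F \<subseteq> L \<longrightarrow>
           infinite ((\<Inter>l\<in>F. shiftset A l) \<inter>
                     {m \<in> Npos. density \<Phi> (shiftset A m \<inter> L) > \<epsilon>})"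
  shows "\<exists>B C. B \<subseteq> Npos \<and> C \<subseteq> Npos \<and> infinite B \<and> infinite C \<and>
               {b + c | b c. b \<in> B \<and> c \<in> C} \<subseteq> A"
proof -
  obtain x where x: "density_cluster \<Phi> x"
    using density_cluster_exists by blast
  have df: "density_functional x"
    using x assms(3) by (rule density_cluster_density_functional)
  have "{m \<in> Npos. density \<Phi> (shiftset A m \<inter> L) > \<epsilon>} \<subseteq> {m \<in> Npos. \<epsilon> \<le> x (shiftset A m \<inter> L)}"
    using density_cluster_eq_density[OF x] assms(5) by force
  then have "infinite ((\<Inter>l\<in>F. shiftset A l) \<inter> {m \<in> Npos. \<epsilon> \<le> x (shiftset A m \<inter> L)})"
    if "finite F" "F \<subseteq> L" for F
    using assms(6) that by (meson Int_mono infinite_super order_refl)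
  then show ?thesis
    by (rule exists_infinite_sumset_subset[OF df assms(4,2)])
qed

end
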